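(* Let $N\ge1$ be an integer and $x\in\mathbb{S}$. Then $\epsilon(N)-\epsilon(N+1)>0$, $\epsilon(N)-2\epsilon(N+1)+\epsilon(N+2)>0$, $\epsilon(N,x)-\epsilon(N+1,x)>0$ and $\epsilon(N,x)-2\epsilon(N+1,x)+\epsilon(N+2,x)>0$.
   Context: Let $\pi,q$ be probability densities with respect to a $\sigma$-finite measure $\mu$ on $\mathbb{X}$ with $q>0$ wherever $\pi>0$; $\pi(dx)=\pi(x)\mu(dx)$, $q(dx)=q(x)\mu(dx)$, $\mathbb{S}=\{\pi>0\}$, $w=\pi/q$ on $\mathbb{S}$ and $0$ elsewhere. For integer $N\ge1$ and $z_1\in\mathbb{S}$, $\epsilon(N,z_1)=\int_{\mathbb{X}^{N-1}}\frac{w(z_1)}{\sum_{i=1}^Nw(z_i)}\prod_{n=2}^Nq(dz_n)$ (so $\epsilon(1,z_1)=1$) and $\epsilon(N)=\int_{\mathbb{S}}\epsilon(N,z)\pi(dz)$. *)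

theory Defs
  imports "HOL-Probability.Probability"
begin

definition supp_set :: "'a measure \<Rightarrow> ('a \<Rightarrow> real) \<Rightarrow> 'a set" where
  "supp_set M p = {x \<in> space M. p x > 0}"

definition wgt :: "('a \<Rightarrow> real) \<Rightarrow> ('a \<Rightarrow> real) \<Rightarrow> 'a \<Rightarrow> real" where
  "wgt p q x = (if p x > 0 then p x / q x else 0)"

text \<open>epsilon(N, z1): the variables z_2, ..., z_N are indexed by {2..N} and drawn
  independently from q(dz) = q(z) mu(dz).\<close>
definition eps_pt :: "'a measure \<Rightarrow> ('a \<Rightarrow> real) \<Rightarrow> ('a \<Rightarrow> real) \<Rightarrow> nat \<Rightarrow> 'a \<Rightarrow> real" where
  "eps_pt M p q N z1 =
     (\<integral>zs. wgt p q z1 / (wgt p q z1 + (\<Sum>n\<in>{2..N}. wgt p q (zs n)))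
        \<partial>(PiM {2..N} (\<lambda>_. density M (\<lambda>x. ennreal (q x)))))"

definition eps :: "'a measure \<Rightarrow> ('a \<Rightarrow> real) \<Rightarrow> ('a \<Rightarrow> real) \<Rightarrow> nat \<Rightarrow> real" where
  "eps M p q N = set_lebesgue_integral (density M (\<lambda>x. ennreal (p x))) (supp_set M p) (eps_pt M p q N)"

end

theory Submission
  imports Defs
begin

(* Write f(t) = a / (a + t) with a = w(x) > 0, and T phi(t) = E phi(t + w(Z)) with Z ~ q. Since
   epsilon(N, x) = E f(S_N) for the sum S_N of N - 1 independent weights w(Z_n), appending a sample
   applies T: epsilon(N + 1, x) = E (T f)(S_N) and epsilon(N + 2, x) = E (T (T f))(S_N).
   As w(Z) >= 0 and w(Z) > 0 with positive probability, T phi < phi on [0, oo) for every bounded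
   strictly decreasing phi. f is strictly decreasing, so f - T f > 0; f also has strictly decreasing
   increments t |-> f(t) - f(t + v), and applying the same fact to them shows that g = f - T f is
   strictly decreasing, whence g - T g = f - 2 T f + T (T f) > 0. Taking expectations over S_N gives
   both inequalities for epsilon(N, x), and integrating over S against pi gives them for epsilon(N). *)

lemma bounded_ratio: "0 \<le> a \<Longrightarrow> bounded ((\<lambda>t::real. a / (a + t)) ` {0..})"
  unfolding bounded_real by (intro exI[of _ 1]) (auto simp: divide_le_eq_1)

lemma strict_antimono_ratio:
  assumes "0 < a"
  shows "strict_antimono_on {0..} (\<lambda>t::real. a / (a + t))"
  using assms by (intro monotone_onI) (auto intro!: divide_strict_left_mono)

lemma strict_antimono_ratio_increment:
  assumes a: "0 < a" and v: "0 < v"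
  shows "strict_antimono_on {0..} (\<lambda>t::real. a / (a + t) - a / (a + (t + v)))"
proof (intro monotone_onI)
  have increment: "a / (a + t) - a / (a + (t + v)) = a * v / ((a + t) * (a + t + v))" if "0 \<le> t" for t
    using that a v by (simp add: field_simps)
  fix s t :: real assume "s \<in> {0..}" "t \<in> {0..}" "s < t"
  moreover from this have "(a + s) * (a + s + v) < (a + t) * (a + t + v)"
    using a v by (intro mult_strict_mono) auto
  ultimately show "a / (a + t) - a / (a + (t + v)) < a / (a + s) - a / (a + (s + v))"
    using a v by (simp add: increment divide_strict_left_mono)
qed

lemma (in finite_measure) set_integral_pos:
  fixes f :: "'a \<Rightarrow> real"
  assumes "A \<in> sets M" "emeasure M A \<noteq> 0" "set_integrable M A f" "\<And>x. x \<in> A \<Longrightarrow> 0 < f x"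
  shows "0 < set_lebesgue_integral M A f"
proof -
  have "integral\<^sup>L M (\<lambda>_. 0) < (\<integral>x. indicator A x * f x \<partial>M)"
    using assms unfolding set_integrable_def
    by (intro integral_less_AE[where A=A] AE_I2)
      (auto simp: indicator_def intro: less_imp_le dest: assms(4))
  then show ?thesis by (simp add: set_lebesgue_integral_def)
qed

lemma prob_space_density:
  assumes "f \<in> borel_measurable M" "(\<integral>\<^sup>+ x. ennreal (f x) \<partial>M) = 1"
  shows "prob_space (density M (\<lambda>x. ennreal (f x)))"
proof
  have "emeasure (density M (\<lambda>x. ennreal (f x))) (space M) = (\<integral>\<^sup>+ x. ennreal (f x) \<partial>M)"
    using assms(1) by (subst emeasure_density) (auto intro!: nn_integral_cong)
  then show "emeasure (density M (\<lambda>x. ennreal (f x))) (space (density M (\<lambda>x. ennreal (f x)))) = 1"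
    using assms(2) by simp
qed

lemma emeasure_density_support_nonzero:
  fixes f g :: "'a \<Rightarrow> real"
  assumes [measurable]: "f \<in> borel_measurable M" "g \<in> borel_measurable M"
    and "\<And>x. x \<in> space M \<Longrightarrow> 0 \<le> f x" "(\<integral>\<^sup>+ x. ennreal (f x) \<partial>M) \<noteq> 0"
    and "\<And>x. x \<in> space M \<Longrightarrow> 0 < f x \<Longrightarrow> 0 < g x"
  shows "emeasure (density M (\<lambda>x. ennreal (g x))) {x \<in> space M. 0 < f x} \<noteq> 0"
proof
  assume "emeasure (density M (\<lambda>x. ennreal (g x))) {x \<in> space M. 0 < f x} = 0"
  then have "AE x in M. 0 < f x \<longrightarrow> ennreal (g x) = 0"
    by (subst (asm) emeasure_density) (auto simp: nn_integral_0_iff_AE indicator_def)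
  then have "AE x in M. ennreal (f x) = 0"
    by (rule AE_mp) (use assms(3,5) in force)
  then show False
    using assms(4) by (simp add: nn_integral_0_iff_AE)
qed

locale nonneg_weight = prob_space Q for Q :: "'a measure" +
  fixes W :: "'a \<Rightarrow> real"
  assumes borel_measurable_W[measurable]: "W \<in> borel_measurable Q"
    and W_nonneg: "y \<in> space Q \<Longrightarrow> 0 \<le> W y"
    and W_pos: "emeasure Q {y \<in> space Q. 0 < W y} \<noteq> 0"
begin

definition shift_mean :: "(real \<Rightarrow> real) \<Rightarrow> real \<Rightarrow> real" where
  "shift_mean \<phi> t = (\<integral>y. \<phi> (t + W y) \<partial>Q)"

lemma borel_measurable_shift_mean:
  assumes [measurable]: "\<phi> \<in> borel_measurable borel"
  shows "shift_mean \<phi> \<in> borel_measurable borel"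
  unfolding shift_mean_def[abs_def]
  by (rule borel_measurable_lebesgue_integral[where f="\<lambda>t y. \<phi> (t + W y)"]) measurable

lemma integrable_shift:
  fixes \<phi> :: "real \<Rightarrow> real"
  assumes "\<phi> \<in> borel_measurable borel" "bounded (\<phi> ` {0..})" "0 \<le> t"
  shows "integrable Q (\<lambda>y. \<phi> (t + W y))"
proof -
  obtain B where "\<And>s. 0 \<le> s \<Longrightarrow> \<bar>\<phi> s\<bar> \<le> B"
    using assms(2) unfolding bounded_real by auto
  with assms(1,3) show ?thesis
    by (intro integrable_const_bound[where B=B] AE_I2) (auto simp: W_nonneg)
qed

lemma bounded_shift_mean:
  assumes "\<phi> \<in> borel_measurable borel" "bounded (\<phi> ` {0..})"
  shows "bounded (shift_mean \<phi> ` {0..})"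
proof -
  obtain B where B: "\<And>s. 0 \<le> s \<Longrightarrow> \<bar>\<phi> s\<bar> \<le> B"
    using assms(2) unfolding bounded_real by auto
  have "\<bar>shift_mean \<phi> t\<bar> \<le> B" if "0 \<le> t" for t
  proof -
    have "\<bar>shift_mean \<phi> t\<bar> \<le> (\<integral>y. \<bar>\<phi> (t + W y)\<bar> \<partial>Q)"
      unfolding shift_mean_def by (rule integral_abs_bound)
    also have "\<dots> \<le> B"
      using that assms by (intro integral_le_const integrable_abs integrable_shift AE_I2) (auto simp: B W_nonneg)
    finally show ?thesis .
  qed
  then show ?thesis unfolding bounded_real by auto
qed

lemma shift_mean_diff:
  assumes "\<phi> \<in> borel_measurable borel" "bounded (\<phi> ` {0..})"
    and "\<psi> \<in> borel_measurable borel" "bounded (\<psi> ` {0..})" "0 \<le> t"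
  shows "shift_mean (\<lambda>s. \<phi> s - \<psi> s) t = shift_mean \<phi> t - shift_mean \<psi> t"
  unfolding shift_mean_def using assms by (simp add: integrable_shift)

lemma shift_mean_less:
  assumes "\<phi> \<in> borel_measurable borel" "bounded (\<phi> ` {0..})" "strict_antimono_on {0..} \<phi>" "0 \<le> t"
  shows "shift_mean \<phi> t < \<phi> t"
proof -
  have shift_less: "\<phi> (t + W y) < \<phi> t" if "0 < W y" for y
    using monotone_onD[OF assms(3), of t "t + W y"] assms(4) that by auto
  have shift_le: "\<phi> (t + W y) \<le> \<phi> t" if "y \<in> space Q" for y
    using shift_less[of y] W_nonneg[OF that] by (cases "W y = 0") (auto simp: less_imp_le)
  have "shift_mean \<phi> t < (\<integral>y. \<phi> t \<partial>Q)"
    unfolding shift_mean_def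
  proof (rule integral_less_AE[OF integrable_shift[OF assms(1,2,4)] _ W_pos])
    show "AE y in Q. y \<in> {y \<in> space Q. 0 < W y} \<longrightarrow> \<phi> (t + W y) \<noteq> \<phi> t"
      using shift_less by (intro AE_I2) (auto simp: less_imp_neq)
  qed (use shift_le in auto)
  then show ?thesis by (simp add: prob_space)
qed

lemma strict_antimono_sub_shift_mean:
  assumes "\<phi> \<in> borel_measurable borel" "bounded (\<phi> ` {0..})"
    and "\<And>v. 0 < v \<Longrightarrow> strict_antimono_on {0..} (\<lambda>s. \<phi> s - \<phi> (s + v))"
  shows "strict_antimono_on {0..} (\<lambda>s. \<phi> s - shift_mean \<phi> s)"
proof (intro monotone_onI)
  fix s t :: real assume s: "s \<in> {0..}" and t: "t \<in> {0..}" and "s < t"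
  define v where "v = t - s"
  have v: "0 < v" using \<open>s < t\<close> by (simp add: v_def)
  have shifted: "bounded ((\<lambda>r. \<phi> (r + v)) ` {0..})"
    using v by (intro bounded_subset[OF assms(2)]) auto
  have "shift_mean \<phi> s - shift_mean \<phi> t = shift_mean (\<lambda>r. \<phi> r - \<phi> (r + v)) s"
    using assms(1,2) shifted s by (subst shift_mean_diff) (auto simp: shift_mean_def v_def ac_simps)
  also have "\<dots> < \<phi> s - \<phi> (s + v)"
    using shift_mean_less[OF _ bounded_minus_comp[OF assms(2) shifted] assms(3)[OF v]] assms(1) s
    by simp
  finally show "\<phi> t - shift_mean \<phi> t < \<phi> s - shift_mean \<phi> s" by (simp add: v_def)
qed

definition sum_weights :: "nat \<Rightarrow> (nat \<Rightarrow> 'a) \<Rightarrow> real" where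
  "sum_weights k zs = (\<Sum>n\<in>{2..k}. W (zs n))"

abbreviation samples :: "nat \<Rightarrow> (nat \<Rightarrow> 'a) measure" where
  "samples k \<equiv> PiM {2..k} (\<lambda>_. Q)"

lemma prob_space_samples: "prob_space (samples k)"
  by (intro prob_space_PiM prob_space_axioms)

lemma borel_measurable_sum_weights[measurable]: "sum_weights k \<in> borel_measurable (samples k)"
  unfolding sum_weights_def by measurable

lemma sum_weights_nonneg: "zs \<in> space (samples k) \<Longrightarrow> 0 \<le> sum_weights k zs"
  unfolding sum_weights_def by (intro sum_nonneg W_nonneg) (auto simp: space_PiM)

lemma sum_weights_insert:
  assumes "1 \<le> k"
  shows "sum_weights (k + 1) (zs(k + 1 := y)) = sum_weights k zs + W y"
proof -
  have "{2..k + 1} = insert (k + 1) {2..k}" using assms by auto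
  then show ?thesis unfolding sum_weights_def by (simp add: add.commute)
qed

lemma integrable_sum_weights:
  fixes \<phi> :: "real \<Rightarrow> real"
  assumes [measurable]: "\<phi> \<in> borel_measurable borel" and "bounded (\<phi> ` {0..})"
  shows "integrable (samples k) (\<lambda>zs. \<phi> (sum_weights k zs))"
proof -
  interpret samples: prob_space "samples k" by (rule prob_space_samples)
  obtain B where "\<And>s. 0 \<le> s \<Longrightarrow> \<bar>\<phi> s\<bar> \<le> B"
    using assms(2) unfolding bounded_real by auto
  then show ?thesis
    by (intro samples.integrable_const_bound[where B=B] AE_I2) (auto simp: sum_weights_nonneg)
qed

lemma integral_sum_weights_Suc:
  fixes \<phi> :: "real \<Rightarrow> real"
  assumes "1 \<le> k" and [measurable]: "\<phi> \<in> borel_measurable borel" and "bounded (\<phi> ` {0..})"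
  shows "(\<integral>zs. \<phi> (sum_weights (k + 1) zs) \<partial>samples (k + 1)) =
    (\<integral>zs. shift_mean \<phi> (sum_weights k zs) \<partial>samples k)"
proof -
  interpret product_sigma_finite "\<lambda>_::nat. Q" by unfold_locales
  have "{2..k + 1} = insert (k + 1) {2..k}" using assms(1) by auto
  then have "(\<integral>zs. \<phi> (sum_weights (k + 1) zs) \<partial>samples (k + 1)) =
      (\<integral>zs. (\<integral>y. \<phi> (sum_weights (k + 1) (zs(k + 1 := y))) \<partial>Q) \<partial>samples k)"
    using product_integral_insert[of "{2..k}" "k + 1" "\<lambda>zs. \<phi> (sum_weights (k + 1) zs)"]
      integrable_sum_weights[OF assms(2,3), of "k + 1"]
    by simp
  then show ?thesis
    by (simp only: sum_weights_insert[OF assms(1)] shift_mean_def)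
qed

lemma integral_sum_weights_pos:
  fixes \<psi> :: "real \<Rightarrow> real"
  assumes "\<psi> \<in> borel_measurable borel" "bounded (\<psi> ` {0..})" "\<And>t. 0 \<le> t \<Longrightarrow> 0 < \<psi> t"
  shows "0 < (\<integral>zs. \<psi> (sum_weights k zs) \<partial>samples k)"
proof -
  interpret samples: prob_space "samples k" by (rule prob_space_samples)
  have "(\<integral>zs. 0 \<partial>samples k) < (\<integral>zs. \<psi> (sum_weights k zs) \<partial>samples k)"
    using assms integrable_sum_weights[OF assms(1,2)]
    by (intro samples.integral_less_AE_space AE_I2)
      (auto simp: sum_weights_nonneg samples.emeasure_space_1)
  then show ?thesis by simp
qed

definition mean_ratio :: "nat \<Rightarrow> real \<Rightarrow> real" where
  "mean_ratio k a = (\<integral>zs. a / (a + sum_weights k zs) \<partial>samples k)"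

lemma borel_measurable_mean_ratio[measurable]: "mean_ratio k \<in> borel_measurable borel"
proof -
  interpret samples: prob_space "samples k" by (rule prob_space_samples)
  show ?thesis unfolding mean_ratio_def[abs_def]
    by (rule samples.borel_measurable_lebesgue_integral[where f="\<lambda>a zs. a / (a + sum_weights k zs)"])
      measurable
qed

lemma abs_mean_ratio_le:
  assumes "0 \<le> a"
  shows "\<bar>mean_ratio k a\<bar> \<le> 1"
proof -
  interpret samples: prob_space "samples k" by (rule prob_space_samples)
  have "\<bar>mean_ratio k a\<bar> \<le> (\<integral>zs. \<bar>a / (a + sum_weights k zs)\<bar> \<partial>samples k)"
    unfolding mean_ratio_def by (rule integral_abs_bound)
  also have "\<dots> \<le> 1"
    using assms integrable_sum_weights[OF _ bounded_ratio[OF assms]]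
    by (intro samples.integral_le_const integrable_abs AE_I2)
      (auto simp: divide_le_eq_1 dest: sum_weights_nonneg)
  finally show ?thesis .
qed

lemma mean_ratio_diff_pos:
  assumes "0 < a" "1 \<le> k"
  shows "0 < mean_ratio k a - mean_ratio (k + 1) a"
proof -
  define f where "f t = a / (a + t)" for t
  have f: "f \<in> borel_measurable borel" "bounded (f ` {0..})"
    using bounded_ratio assms(1) by (auto simp: f_def[abs_def])
  have "strict_antimono_on {0..} f"
    using strict_antimono_ratio[OF assms(1)] by (simp add: f_def[abs_def])
  note Tf = borel_measurable_shift_mean[OF f(1)] bounded_shift_mean[OF f]
  have "mean_ratio k a - mean_ratio (k + 1) a =
      (\<integral>zs. f (sum_weights k zs) - shift_mean f (sum_weights k zs) \<partial>samples k)"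
    using integral_sum_weights_Suc[OF assms(2) f] integrable_sum_weights[OF f] integrable_sum_weights[OF Tf]
    by (simp add: mean_ratio_def f_def)
  also have "0 < \<dots>"
    by (rule integral_sum_weights_pos)
      (use f Tf shift_mean_less[OF f \<open>strict_antimono_on {0..} f\<close>] in \<open>auto intro: bounded_minus_comp\<close>)
  finally show ?thesis .
qed

lemma mean_ratio_second_diff_pos:
  assumes "0 < a" "1 \<le> k"
  shows "0 < mean_ratio k a - 2 * mean_ratio (k + 1) a + mean_ratio (k + 2) a"
proof -
  define f where "f t = a / (a + t)" for t
  define g where "g t = f t - shift_mean f t" for t
  have f: "f \<in> borel_measurable borel" "bounded (f ` {0..})"
    using bounded_ratio assms(1) by (auto simp: f_def[abs_def])
  note Tf = borel_measurable_shift_mean[OF f(1)] bounded_shift_mean[OF f]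
  note TTf = borel_measurable_shift_mean[OF Tf(1)] bounded_shift_mean[OF Tf]
  have g: "g \<in> borel_measurable borel" "bounded (g ` {0..})"
    using f Tf by (auto simp: g_def[abs_def] intro: bounded_minus_comp)
  have "strict_antimono_on {0..} g"
    unfolding g_def[abs_def] using strict_antimono_ratio_increment[OF assms(1)]
    by (intro strict_antimono_sub_shift_mean f) (simp add: f_def[abs_def])
  have Tg: "shift_mean g t = shift_mean f t - shift_mean (shift_mean f) t" if "0 \<le> t" for t
    unfolding g_def[abs_def] using f Tf that by (rule shift_mean_diff)
  have "mean_ratio (k + 2) a = (\<integral>zs. f (sum_weights (k + 1 + 1) zs) \<partial>samples (k + 1 + 1))"
    by (simp add: mean_ratio_def f_def)
  also have "\<dots> = (\<integral>zs. shift_mean f (sum_weights (k + 1) zs) \<partial>samples (k + 1))"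
    using assms(2) f by (intro integral_sum_weights_Suc) auto
  also have "\<dots> = (\<integral>zs. shift_mean (shift_mean f) (sum_weights k zs) \<partial>samples k)"
    by (rule integral_sum_weights_Suc[OF assms(2) Tf])
  finally have "mean_ratio k a - 2 * mean_ratio (k + 1) a + mean_ratio (k + 2) a =
      (\<integral>zs. g (sum_weights k zs) - shift_mean g (sum_weights k zs) \<partial>samples k)"
    using integral_sum_weights_Suc[OF assms(2) f]
      integrable_sum_weights[OF f] integrable_sum_weights[OF Tf] integrable_sum_weights[OF TTf]
    by (simp add: mean_ratio_def g_def Tg sum_weights_nonneg f_def cong: Bochner_Integration.integral_cong)
  also have "0 < \<dots>"
    by (rule integral_sum_weights_pos)
      (use g Tg borel_measurable_shift_mean[OF g(1)] bounded_shift_mean[OF g]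
        shift_mean_less[OF g \<open>strict_antimono_on {0..} g\<close>] in \<open>auto intro: bounded_minus_comp\<close>)
  finally show ?thesis .
qed

end

locale importance_sampling =
  fixes M :: "'a measure" and p q :: "'a \<Rightarrow> real"
  assumes borel_measurable_p[measurable]: "p \<in> borel_measurable M"
    and borel_measurable_q[measurable]: "q \<in> borel_measurable M"
    and p_nonneg: "\<And>y. y \<in> space M \<Longrightarrow> 0 \<le> p y"
    and q_nonneg: "\<And>y. y \<in> space M \<Longrightarrow> 0 \<le> q y"
    and p_normalized: "(\<integral>\<^sup>+ y. ennreal (p y) \<partial>M) = 1"
    and q_normalized: "(\<integral>\<^sup>+ y. ennreal (q y) \<partial>M) = 1"
    and q_pos: "\<And>y. y \<in> space M \<Longrightarrow> 0 < p y \<Longrightarrow> 0 < q y"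
begin

lemma wgt_pos_iff: "y \<in> space M \<Longrightarrow> 0 < wgt p q y \<longleftrightarrow> 0 < p y"
  unfolding wgt_def using q_pos by auto

sublocale nonneg_weight "density M (\<lambda>x. ennreal (q x))" "wgt p q"
proof (intro nonneg_weight.intro nonneg_weight_axioms.intro)
  show "prob_space (density M (\<lambda>x. ennreal (q x)))"
    by (rule prob_space_density) (simp_all add: q_normalized)
  show "wgt p q \<in> borel_measurable (density M (\<lambda>x. ennreal (q x)))"
    unfolding wgt_def by measurable
  show "0 \<le> wgt p q y" if "y \<in> space (density M (\<lambda>x. ennreal (q x)))" for y
    using that p_nonneg q_nonneg by (simp add: wgt_def)
  have "{y \<in> space (density M (\<lambda>x. ennreal (q x))). 0 < wgt p q y} = supp_set M p"
    using wgt_pos_iff by (auto simp: supp_set_def)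
  then show "emeasure (density M (\<lambda>x. ennreal (q x)))
      {y \<in> space (density M (\<lambda>x. ennreal (q x))). 0 < wgt p q y} \<noteq> 0"
    using emeasure_density_support_nonzero[of p M q] p_nonneg p_normalized q_pos
    by (simp add: supp_set_def)
qed

lemma eps_pt_eq_mean_ratio: "eps_pt M p q k = (\<lambda>x. mean_ratio k (wgt p q x))"
  unfolding eps_pt_def[abs_def] mean_ratio_def sum_weights_def ..

abbreviation target :: "'a measure" where
  "target \<equiv> density M (\<lambda>x. ennreal (p x))"

lemma prob_space_target: "prob_space target"
  by (rule prob_space_density) (simp_all add: p_normalized)

lemma supp_set_sets[measurable]: "supp_set M p \<in> sets target"
  unfolding supp_set_def by measurable

lemma emeasure_supp_set: "emeasure target (supp_set M p) \<noteq> 0"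
  unfolding supp_set_def
  using emeasure_density_support_nonzero[of p M p] p_nonneg p_normalized by simp

lemma set_integrable_mean_ratio:
  "set_integrable target (supp_set M p) (\<lambda>x. mean_ratio k (wgt p q x))"
proof -
  interpret target: prob_space target by (rule prob_space_target)
  show ?thesis
    unfolding set_integrable_def
    using abs_mean_ratio_le W_nonneg
    by (intro target.integrable_const_bound[where B=1] AE_I2)
      (auto simp: indicator_def supp_set_def)
qed

lemma eps_diff_pos:
  assumes "1 \<le> k"
  shows "0 < eps M p q k - eps M p q (k + 1)"
proof -
  interpret target: prob_space target by (rule prob_space_target)
  have "eps M p q k - eps M p q (k + 1) =
      (LINT x:supp_set M p|target. mean_ratio k (wgt p q x) - mean_ratio (k + 1) (wgt p q x))"
    by (simp add: eps_def eps_pt_eq_mean_ratio set_integrable_mean_ratio)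
  also have "0 < \<dots>"
    using mean_ratio_diff_pos[OF _ assms] wgt_pos_iff set_integrable_mean_ratio
    by (intro target.set_integral_pos emeasure_supp_set supp_set_sets) (auto simp: supp_set_def)
  finally show ?thesis .
qed

lemma eps_second_diff_pos:
  assumes "1 \<le> k"
  shows "0 < eps M p q k - 2 * eps M p q (k + 1) + eps M p q (k + 2)"
proof -
  interpret target: prob_space target by (rule prob_space_target)
  have "eps M p q k - 2 * eps M p q (k + 1) + eps M p q (k + 2) =
      (LINT x:supp_set M p|target. mean_ratio k (wgt p q x) - 2 * mean_ratio (k + 1) (wgt p q x)
        + mean_ratio (k + 2) (wgt p q x))"
    by (simp add: eps_def eps_pt_eq_mean_ratio set_integrable_mean_ratio)
  also have "0 < \<dots>"
    using mean_ratio_second_diff_pos[OF _ assms] wgt_pos_iff set_integrable_mean_ratio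
    by (intro target.set_integral_pos emeasure_supp_set supp_set_sets) (auto simp: supp_set_def)
  finally show ?thesis .
qed

end

theorem lemma6p9:
  fixes M :: "'a measure" and p q :: "'a \<Rightarrow> real" and N :: nat and x :: 'a
  assumes "sigma_finite_measure M"
    and "p \<in> borel_measurable M" and "q \<in> borel_measurable M"
    and "\<And>y. y \<in> space M \<Longrightarrow> p y \<ge> 0"
    and "\<And>y. y \<in> space M \<Longrightarrow> q y \<ge> 0"
    and "(\<integral>\<^sup>+ y. ennreal (p y) \<partial>M) = 1"
    and "(\<integral>\<^sup>+ y. ennreal (q y) \<partial>M) = 1"
    and "\<And>y. y \<in> space M \<Longrightarrow> p y > 0 \<Longrightarrow> q y > 0"
    and "N \<ge> 1"
    and "x \<in> supp_set M p"
  shows "eps M p q N - eps M p q (N + 1) > 0 \<and>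
     eps M p q N - 2 * eps M p q (N + 1) + eps M p q (N + 2) > 0 \<and>
     eps_pt M p q N x - eps_pt M p q (N + 1) x > 0 \<and>
     eps_pt M p q N x - 2 * eps_pt M p q (N + 1) x + eps_pt M p q (N + 2) x > 0"
proof -
  \<comment> \<open>All measures involved are probability measures.\<close>
  interpret importance_sampling M p q
    using assms(2-8) by unfold_locales auto
  have "0 < wgt p q x"
    using assms(10) wgt_pos_iff by (simp add: supp_set_def)
  then show ?thesis
    using eps_diff_pos[OF assms(9)] eps_second_diff_pos[OF assms(9)]
      mean_ratio_diff_pos[OF _ assms(9)] mean_ratio_second_diff_pos[OF _ assms(9)]
    by (simp add: eps_pt_eq_mean_ratio)
qed

end
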